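(* Let $G$ be a connected graph with $|V(G)|\ge 3$ and $L(G)=2l(G)$, and let $V_1(G)$ be as in the context. Then: (1) for any maximum matchings $F_L,F_l$ of $G$ with $\nu(G\setminus F_L)=L(G)$ and $\nu(G\setminus F_l)=l(G)$, we have $(V(F_L)\setminus V(F_l))\cap V_1(G)=\emptyset$; (2) there exist a maximum matching $F_l$ of $G$ with $\nu(G\setminus F_l)=l(G)$ and a maximum matching $F_L$ of $G$ with $\nu(G\setminus F_L)=L(G)$ such that $V_1(G)\subseteq V(F_L\cap F_l)\cup (V(F_l)\setminus V(F_L))$.
   Context: Graphs are finite, undirected, without loops or multiple edges. $\nu(G)$ denotes the maximum size of a matching of $G$; a matching is maximum if it has $\nu(G)$ edges. For $F\subseteq E(G)$, $G\setminus F$ is the graph with vertex set $V(G)$ and edge set $E(G)\setminus F$, and $V(F)$ is the set of vertices incident to some edge of $F$. Define $L(G)=\max\{\nu(G\setminus F): F \text{ a maximum matching of } G\}$ and $l(G)=\min\{\nu(G\setminus F): F \text{ a maximum matching of } G\}$. A triangle is a cycle of length 3. Let $T$ be the set of triangles of $G$ containing at least two vertices of degree two (each vertex of degree two lies in at most one triangle of $T$). From each $t\in T$ choose one vertex $v_t$ of $t$ of degree two, and set $V_1(G)=\{v: \deg_G(v)=1\}\cup\{v_t: t\in T\}$. *)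

theory Defs
  imports Main
begin

definition simple_graph :: "'a set \<Rightarrow> 'a set set \<Rightarrow> bool" where
  "simple_graph V E \<longleftrightarrow> finite V \<and> (\<forall>e\<in>E. \<exists>u v. e = {u, v} \<and> u \<noteq> v \<and> u \<in> V \<and> v \<in> V)"

definition graph_connected :: "'a set \<Rightarrow> 'a set set \<Rightarrow> bool" where
  "graph_connected V E \<longleftrightarrow>
     (\<forall>u\<in>V. \<forall>v\<in>V. (u, v) \<in> {(x, y). {x, y} \<in> E}\<^sup>*)"

definition degree :: "'a set set \<Rightarrow> 'a \<Rightarrow> nat" where
  "degree E v = card {e \<in> E. v \<in> e}"

definition matching :: "'a set set \<Rightarrow> bool" where
  "matching M \<longleftrightarrow> (\<forall>e1\<in>M. \<forall>e2\<in>M. e1 \<noteq> e2 \<longrightarrow> e1 \<inter> e2 = {})"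

definition matching_in :: "'a set set \<Rightarrow> 'a set set \<Rightarrow> bool" where
  "matching_in E M \<longleftrightarrow> M \<subseteq> E \<and> matching M"

text \<open>\<nu>: maximum size of a matching (E finite). Removing edges keeps the vertex set,
  which does not affect matchings, so \<nu> depends only on the edge set.\<close>
definition nu :: "'a set set \<Rightarrow> nat" where
  "nu E = Max (card ` {M. matching_in E M})"

definition max_matching :: "'a set set \<Rightarrow> 'a set set \<Rightarrow> bool" where
  "max_matching E M \<longleftrightarrow> matching_in E M \<and> card M = nu E"

definition L_num :: "'a set set \<Rightarrow> nat" where
  "L_num E = Max ((\<lambda>F. nu (E - F)) ` {F. max_matching E F})"

definition l_num :: "'a set set \<Rightarrow> nat" where
  "l_num E = Min ((\<lambda>F. nu (E - F)) ` {F. max_matching E F})"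

definition Vs :: "'a set set \<Rightarrow> 'a set" where
  "Vs F = \<Union>F"

definition triangle :: "'a set set \<Rightarrow> 'a set \<Rightarrow> bool" where
  "triangle E t \<longleftrightarrow> (\<exists>a b c. t = {a, b, c} \<and> a \<noteq> b \<and> b \<noteq> c \<and> a \<noteq> c \<and>
                                {a, b} \<in> E \<and> {b, c} \<in> E \<and> {a, c} \<in> E)"

definition Tri2 :: "'a set set \<Rightarrow> 'a set set" where
  "Tri2 E = {t. triangle E t \<and> 2 \<le> card {v \<in> t. degree E v = 2}}"

text \<open>S is a valid V_1(G): the degree-one vertices together with one chosen
  degree-two vertex v_t from each t in T.\<close>
definition is_V1 :: "'a set \<Rightarrow> 'a set set \<Rightarrow> 'a set \<Rightarrow> bool" where
  "is_V1 V E S \<longleftrightarrow> (\<exists>f. (\<forall>t\<in>Tri2 E. f t \<in> t \<and> degree E (f t) = 2) \<and>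
                      S = {v \<in> V. degree E v = 1} \<union> f ` Tri2 E)"

end

theory Submission
  imports Defs
begin

(* Let FL and Fl be maximum matchings attaining L(G) and l(G), and let
   M be a maximum matching of G - FL, so |M| = L = 2l.  Both M - Fl and FL - Fl are
   matchings of G - Fl, hence have at most l edges, and |M \<inter> Fl| \<le> |Fl - FL| = |FL - Fl|;
   counting forces  Fl - FL \<subseteq> M  and  |M - Fl| = |FL - Fl| = l = \<nu>(G - Fl)
   (gap_exchange).  So neither M - Fl nor FL - Fl can be augmented inside G - Fl.
   Every vertex of V_1 is a "V_1-candidate" (degree one, or degree two in a triangle
   of T), and if a maximum matching misses a candidate v, one of its edges meets all
   edges at v (V1_candidate_dominated).  The rigidity above then shows that a
   candidate missed by Fl is missed by FL, which is part (1), and that every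
   candidate is covered by every Fl (candidate_covered_by_Fl).  For part (2) we take
   FL minimising |V(FL) \<inter> V_1|: a vertex of V_1 covered by FL and Fl through
   different edges lies in a triangle, and rotating the FL-edge around the triangle
   would decrease the measure (triangle_swap_fewer_V1). *)

section \<open>Graphs and matchings\<close>

lemma simple_graph_finite_edges: "simple_graph V E \<Longrightarrow> finite E"
proof -
  assume s: "simple_graph V E"
  have "E \<subseteq> Pow V"
    using s unfolding simple_graph_def by fastforce
  thus "finite E"
    using s finite_subset unfolding simple_graph_def by blast
qed

lemma simple_graph_edge_other_end:
  "simple_graph V E \<Longrightarrow> e \<in> E \<Longrightarrow> v \<in> e \<Longrightarrow> \<exists>u. u \<noteq> v \<and> e = {v, u}"
  unfolding simple_graph_def by fastforce

lemma simple_graph_Vs_subset: "simple_graph V E \<Longrightarrow> F \<subseteq> E \<Longrightarrow> Vs F \<subseteq> V"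
  unfolding simple_graph_def Vs_def by fastforce

lemma Vs_iff: "x \<in> Vs F \<longleftrightarrow> (\<exists>e\<in>F. x \<in> e)"
  unfolding Vs_def by blast

lemma matchingD: "matching M \<Longrightarrow> e \<in> M \<Longrightarrow> e' \<in> M \<Longrightarrow> x \<in> e \<Longrightarrow> x \<in> e' \<Longrightarrow> e = e'"
  unfolding matching_def by blast

lemma matching_subset: "matching M \<Longrightarrow> N \<subseteq> M \<Longrightarrow> matching N"
  unfolding matching_def by blast

lemma matching_insert: "matching M \<Longrightarrow> \<forall>k\<in>M. k \<inter> e = {} \<Longrightarrow> matching (insert e M)"
  unfolding matching_def by blast

lemma finite_matchings: "finite E \<Longrightarrow> finite {M. matching_in E M}"
  by (rule finite_subset[of _ "Pow E"]) (auto simp: matching_in_def)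

lemma nu_upper: "finite E \<Longrightarrow> matching_in E M \<Longrightarrow> card M \<le> nu E"
  unfolding nu_def using finite_matchings by (intro Max_ge) auto

lemma nu_attained: "finite E \<Longrightarrow> \<exists>M. matching_in E M \<and> card M = nu E"
proof -
  assume "finite E"
  moreover have "matching_in E {}" by (simp add: matching_in_def matching_def)
  ultimately have "nu E \<in> card ` {M. matching_in E M}"
    unfolding nu_def using finite_matchings by (intro Max_in) auto
  thus ?thesis by auto
qed

lemma matching_augment:
  assumes "finite E" "matching_in E N" "e \<in> E" "e \<notin> N" "\<forall>k\<in>N. k \<inter> e = {}"
  shows "card N < nu E"
proof -
  have "finite N" using assms(1,2) finite_subset unfolding matching_in_def by blast
  have "matching_in E (insert e N)"
    using assms(2,3,5) matching_insert unfolding matching_in_def by blast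
  hence "card (insert e N) \<le> nu E" using nu_upper[OF assms(1)] by blast
  thus ?thesis using \<open>finite N\<close> assms(4) by simp
qed

lemma max_matching_meets_edge:
  assumes s: "simple_graph V E" and m: "max_matching E F" and e: "e \<in> E"
  shows "\<exists>g\<in>F. g \<inter> e \<noteq> {}"
proof (rule ccontr)
  assume "\<not> ?thesis"
  hence disj: "\<forall>g\<in>F. g \<inter> e = {}" by blast
  have "e \<noteq> {}" using simple_graph_edge_other_end[OF s e] s e
    unfolding simple_graph_def by blast
  hence "e \<notin> F" using disj by blast
  hence "card F < nu E"
    using matching_augment[OF simple_graph_finite_edges[OF s] _ e _ disj] m
    unfolding max_matching_def by blast
  thus False using m unfolding max_matching_def by simp
qed

lemma max_matching_swap:
  assumes fin: "finite E" and m: "max_matching E F" and h: "h \<in> F"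
    and z: "z \<in> E" "z \<notin> F" and disj: "\<forall>k\<in>F - {h}. k \<inter> z = {}"
  shows "max_matching E (insert z (F - {h}))"
proof -
  have FE: "F \<subseteq> E" and mF: "matching F" and cF: "card F = nu E"
    using m unfolding max_matching_def matching_in_def by auto
  have "finite F" using FE fin finite_subset by blast
  have "matching (insert z (F - {h}))"
    using matching_insert[OF matching_subset[OF mF] disj] by blast
  moreover have "card (insert z (F - {h})) = card F"
    using card_Suc_Diff1[OF \<open>finite F\<close> h] \<open>finite F\<close> z(2) by simp
  ultimately show ?thesis using FE z(1) cF unfolding max_matching_def matching_in_def by auto
qed

lemma finite_max_matchings: "finite E \<Longrightarrow> finite {F. max_matching E F}"
  by (rule finite_subset[of _ "Pow E"]) (auto simp: max_matching_def matching_in_def)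

lemma max_matchings_nonempty: "finite E \<Longrightarrow> {F. max_matching E F} \<noteq> {}"
  using nu_attained unfolding max_matching_def by blast

lemma L_num_upper: "finite E \<Longrightarrow> max_matching E F \<Longrightarrow> nu (E - F) \<le> L_num E"
  unfolding L_num_def using finite_max_matchings by (intro Max_ge) auto

lemma L_num_attained: "finite E \<Longrightarrow> \<exists>F. max_matching E F \<and> nu (E - F) = L_num E"
proof -
  assume f: "finite E"
  have "L_num E \<in> (\<lambda>F. nu (E - F)) ` {F. max_matching E F}" unfolding L_num_def
    using finite_max_matchings[OF f] max_matchings_nonempty[OF f] by (intro Max_in) auto
  thus ?thesis by auto
qed

lemma l_num_attained: "finite E \<Longrightarrow> \<exists>F. max_matching E F \<and> nu (E - F) = l_num E"
proof -
  assume f: "finite E"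
  have "l_num E \<in> (\<lambda>F. nu (E - F)) ` {F. max_matching E F}" unfolding l_num_def
    using finite_max_matchings[OF f] max_matchings_nonempty[OF f] by (intro Min_in) auto
  thus ?thesis by auto
qed

section \<open>Vertices of degree one and two\<close>

lemma degree_one_unique_edge:
  assumes "degree E x = 1" "e \<in> E" "e' \<in> E" "x \<in> e" "x \<in> e'"
  shows "e = e'"
proof -
  obtain z where star: "{f \<in> E. x \<in> f} = {z}"
    using assms(1) unfolding degree_def by (rule card_1_singletonE)
  have "e \<in> {f \<in> E. x \<in> f}" "e' \<in> {f \<in> E. x \<in> f}" using assms(2-5) by simp_all
  thus ?thesis unfolding star by simp
qed

lemma degree_two_edges:
  assumes "finite E" "degree E x = 2" "{x, p} \<in> E" "{x, q} \<in> E" "p \<noteq> q"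
  shows "{e \<in> E. x \<in> e} = {{x, p}, {x, q}}"
proof (rule card_seteq[symmetric])
  show "finite {e \<in> E. x \<in> e}" using assms(1) by simp
  show "{{x, p}, {x, q}} \<subseteq> {e \<in> E. x \<in> e}" using assms(3,4) by simp
  have "{x, p} \<noteq> {x, q}" using assms(5) by (simp add: doubleton_eq_iff)
  thus "card {e \<in> E. x \<in> e} \<le> card {{x, p}, {x, q}}"
    using assms(2) unfolding degree_def by simp
qed

lemma triangle_edge: "triangle E t \<Longrightarrow> p \<in> t \<Longrightarrow> q \<in> t \<Longrightarrow> p \<noteq> q \<Longrightarrow> {p, q} \<in> E"
  unfolding triangle_def by (auto simp: insert_commute)

lemma triangle_card: "triangle E t \<Longrightarrow> card t = 3"
  unfolding triangle_def by auto

lemma triangle_at_degree_two: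
  assumes fin: "finite E" and tr: "triangle E t" and y: "y \<in> t" and dy: "degree E y = 2"
    and e: "{y, p} \<in> E" "{y, q} \<in> E" "p \<noteq> q"
  shows "t = {y, p, q}"
proof (rule card_seteq)
  have star: "{e \<in> E. y \<in> e} = {{y, p}, {y, q}}" using degree_two_edges[OF fin dy e] .
  show "t \<subseteq> {y, p, q}"
  proof
    fix z assume z: "z \<in> t"
    show "z \<in> {y, p, q}"
    proof (cases "z = y")
      case False
      hence "{y, z} \<in> {e \<in> E. y \<in> e}" using triangle_edge[OF tr y z] by simp
      hence "{y, z} = {y, p} \<or> {y, z} = {y, q}" unfolding star by simp
      thus ?thesis by (auto simp: doubleton_eq_iff)
    qed simp
  qed
  show "finite {y, p, q}" by simp
  show "card {y, p, q} \<le> card t" using triangle_card[OF tr] by (simp add: card_insert_le_m1)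
qed

definition deg2_triangle :: "'a set set \<Rightarrow> 'a \<Rightarrow> 'a \<Rightarrow> 'a \<Rightarrow> bool" where
  "deg2_triangle E x d w \<longleftrightarrow> x \<noteq> d \<and> x \<noteq> w \<and> d \<noteq> w \<and> {d, w} \<in> E \<and>
     {e \<in> E. x \<in> e} = {{x, d}, {x, w}} \<and> {e \<in> E. d \<in> e} = {{x, d}, {d, w}}"

lemma deg2_triangleD:
  assumes "deg2_triangle E x d w"
  shows "x \<noteq> d" "x \<noteq> w" "d \<noteq> w" "{x, d} \<in> E" "{x, w} \<in> E" "{d, w} \<in> E"
    and "\<And>f. f \<in> E \<Longrightarrow> x \<in> f \<Longrightarrow> f = {x, d} \<or> f = {x, w}"
    and "\<And>f. f \<in> E \<Longrightarrow> d \<in> f \<Longrightarrow> f = {x, d} \<or> f = {d, w}"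
  using assms unfolding deg2_triangle_def by blast+

lemma deg2_triangle_degrees:
  assumes "deg2_triangle E x d w"
  shows "degree E x = 2" "degree E d = 2"
  using assms unfolding deg2_triangle_def degree_def by (auto simp: doubleton_eq_iff)

lemma Tri2_structure:
  assumes fin: "finite E" and t: "t \<in> Tri2 E" and x: "x \<in> t" and dx: "degree E x = 2"
  shows "\<exists>d w. t = {x, d, w} \<and> deg2_triangle E x d w"
proof -
  have tr: "triangle E t" and two: "2 \<le> card {v \<in> t. degree E v = 2}"
    using t unfolding Tri2_def by auto
  obtain d where d: "d \<in> t" "d \<noteq> x" "degree E d = 2"
  proof -
    have "\<not> {v \<in> t. degree E v = 2} \<subseteq> {x}"
      using two card_mono[of "{x}" "{v \<in> t. degree E v = 2}"] by auto
    thus ?thesis using that by blast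
  qed
  have "card (t - {x, d}) = 1"
    using triangle_card[OF tr] x d(1,2) by (simp add: card_Diff_subset)
  then obtain w where w: "t - {x, d} = {w}" by (rule card_1_singletonE)
  hence t_eq: "t = {x, d, w}" and wd: "w \<noteq> x" "w \<noteq> d" using x d(1) by auto
  have edges: "{x, d} \<in> E" "{x, w} \<in> E" "{d, w} \<in> E"
    using triangle_edge[OF tr] t_eq d(2) wd by auto
  have "{e \<in> E. x \<in> e} = {{x, d}, {x, w}}"
    using degree_two_edges[OF fin dx edges(1,2)] wd d(2) by simp
  moreover have "{d, x} \<in> E" using edges(1) by (simp add: insert_commute)
  hence "{e \<in> E. d \<in> e} = {{x, d}, {d, w}}"
    using degree_two_edges[OF fin d(3) _ edges(3)] wd d(2) by (simp add: insert_commute)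
  ultimately show ?thesis unfolding deg2_triangle_def using t_eq d(2) wd edges(3) by blast
qed

lemma deg2_triangle_partner_missed:
  assumes dt: "deg2_triangle E x d w" and F: "matching F" "F \<subseteq> E" and xw: "{x, w} \<in> F"
  shows "d \<notin> Vs F"
proof
  assume "d \<in> Vs F"
  then obtain k where k: "k \<in> F" "d \<in> k" by (auto simp: Vs_iff)
  note tri = deg2_triangleD[OF dt]
  have "k = {x, d} \<or> k = {d, w}" using tri(8) k F(2) by blast
  hence "k \<inter> {x, w} \<noteq> {}" by auto
  hence "k = {x, w}" using matchingD[OF F(1) k(1) xw] by blast
  thus False using k(2) tri(1,3) by auto
qed

text \<open>In a matching using dw, the edge dw can be rotated to xw: x has no other
  matching edge, since both its edges meet dw or equal xw.\<close>
lemma deg2_triangle_rotate: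
  assumes dt: "deg2_triangle E x d w" and M: "matching M" "M \<subseteq> E" "finite M"
    and dw: "{d, w} \<in> M"
  shows "matching (insert {x, w} (M - {{d, w}}))" "card (insert {x, w} (M - {{d, w}})) = card M"
proof -
  note tri = deg2_triangleD[OF dt]
  have xwM: "{x, w} \<notin> M"
  proof
    assume "{x, w} \<in> M"
    hence "{x, w} = {d, w}" using matchingD[OF M(1) _ dw, of "{x, w}" w] by simp
    thus False using tri(1) by (simp add: doubleton_eq_iff)
  qed
  have "k \<inter> {x, w} = {}" if k: "k \<in> M - {{d, w}}" for k
  proof -
    have "w \<notin> k" using matchingD[OF M(1) _ dw, of k w] k by auto
    moreover have "x \<notin> k"
    proof
      assume "x \<in> k"
      hence "k = {x, d} \<or> k = {x, w}" using tri(7)[of k] k M(2) by blast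
      moreover have "k \<noteq> {x, w}" using k xwM by blast
      ultimately have "d \<in> k" by blast
      thus False using matchingD[OF M(1) _ dw, of k d] k by auto
    qed
    ultimately show ?thesis by blast
  qed
  hence "\<forall>k\<in>M - {{d, w}}. k \<inter> {x, w} = {}" by blast
  thus "matching (insert {x, w} (M - {{d, w}}))"
    by (rule matching_insert[OF matching_subset[OF M(1) Diff_subset]])
  show "card (insert {x, w} (M - {{d, w}})) = card M"
    using card_Suc_Diff1[OF M(3) dw] M(3) xwM by simp
qed

text \<open>The vertices that may belong to V_1: degree one, or degree two in a triangle of T.\<close>
definition V1_candidate :: "'a set set \<Rightarrow> 'a \<Rightarrow> bool" where
  "V1_candidate E v \<longleftrightarrow> degree E v = 1 \<or> (degree E v = 2 \<and> (\<exists>t\<in>Tri2 E. v \<in> t))"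

lemma is_V1_candidates: "is_V1 V E V1 \<Longrightarrow> v \<in> V1 \<Longrightarrow> V1_candidate E v"
  unfolding is_V1_def V1_candidate_def by auto

lemma V1_candidate_has_edge: "V1_candidate E v \<Longrightarrow> \<exists>e\<in>E. v \<in> e"
proof -
  assume "V1_candidate E v"
  hence "card {e \<in> E. v \<in> e} \<noteq> 0" unfolding V1_candidate_def degree_def by auto
  hence "{e \<in> E. v \<in> e} \<noteq> {}" by (metis card.empty)
  thus ?thesis by blast
qed

text \<open>If a maximum matching misses a V_1-candidate v, then one of its edges meets
  every edge at v: for degree one this is the edge meeting the pendant edge, in a
  triangle xvw with deg v = deg x = 2 it is the edge xw.\<close>
lemma V1_candidate_dominated:
  assumes s: "simple_graph V E" and v: "V1_candidate E v"
    and m: "max_matching E F" and vF: "v \<notin> Vs F"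
  shows "\<exists>g\<in>F. \<forall>f\<in>E. v \<in> f \<longrightarrow> f \<inter> g \<noteq> {}"
proof -
  have fin: "finite E" using simple_graph_finite_edges[OF s] .
  have FE: "F \<subseteq> E" using m unfolding max_matching_def matching_in_def by blast
  from v consider (pendant) "degree E v = 1" | (tri) t where "degree E v = 2" "t \<in> Tri2 E" "v \<in> t"
    unfolding V1_candidate_def by blast
  then show ?thesis
  proof cases
    case pendant
    obtain e where e: "e \<in> E" "v \<in> e" using V1_candidate_has_edge[OF v] by blast
    obtain g where g: "g \<in> F" "g \<inter> e \<noteq> {}" using max_matching_meets_edge[OF s m e(1)] by blast
    have "f = e" if "f \<in> E" "v \<in> f" for f
      using degree_one_unique_edge[OF pendant that(1) e(1) that(2) e(2)] .
    thus ?thesis using g by blast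
  next
    case tri
    obtain d w where dt: "deg2_triangle E v d w"
      using Tri2_structure[OF fin tri(2,3,1)] by blast
    note dt = deg2_triangleD[OF dt]
    obtain g where g: "g \<in> F" "g \<inter> {v, d} \<noteq> {}" using max_matching_meets_edge[OF s m dt(4)] by blast
    have "v \<notin> g" using vF g(1) by (auto simp: Vs_iff)
    hence "g \<noteq> {v, d}" "d \<in> g" using g(2) by auto
    hence gdw: "g = {d, w}" using dt(8)[of g] g(1) FE by blast
    have "f \<inter> g \<noteq> {}" if "f \<in> E" "v \<in> f" for f
      using dt(7)[OF that] gdw by auto
    thus ?thesis using g(1) by blast
  qed
qed

lemma V1_vertex_with_two_edges:
  assumes fin: "finite E" and f: "\<forall>t\<in>Tri2 E. f t \<in> t \<and> degree E (f t) = 2"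
    and y: "y \<in> {v \<in> V. degree E v = 1} \<union> f ` Tri2 E"
    and e: "{y, p} \<in> E" "{y, q} \<in> E" "p \<noteq> q"
  shows "y = f {y, p, q}"
proof -
  have "{y, p} \<noteq> {y, q}" using e(3) by (auto simp: doubleton_eq_iff)
  hence "degree E y \<noteq> 1" using degree_one_unique_edge[OF _ e(1,2)] by auto
  then obtain t where t: "t \<in> Tri2 E" "y = f t" using y by blast
  have "triangle E t" using t(1) unfolding Tri2_def by simp
  moreover have "y \<in> t" "degree E y = 2" using f t by auto
  ultimately have "t = {y, p, q}" using triangle_at_degree_two[OF fin _ _ _ e] by blast
  thus ?thesis using t(2) by simp
qed

text \<open>The two partners d, w of the representative x = f t of a triangle t in T are
  not in V_1: each has two distinct edges inside t, so it could only represent t.\<close>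
lemma deg2_triangle_partners_not_V1:
  assumes fin: "finite E" and f: "\<forall>t\<in>Tri2 E. f t \<in> t \<and> degree E (f t) = 2"
    and t: "t = {x, d, w}" "x = f t" and dt: "deg2_triangle E x d w"
  shows "d \<notin> {v \<in> V. degree E v = 1} \<union> f ` Tri2 E" "w \<notin> {v \<in> V. degree E v = 1} \<union> f ` Tri2 E"
proof -
  note tri = deg2_triangleD[OF dt]
  show "d \<notin> {v \<in> V. degree E v = 1} \<union> f ` Tri2 E"
  proof
    assume d: "d \<in> {v \<in> V. degree E v = 1} \<union> f ` Tri2 E"
    have "{d, x} \<in> E" using tri(4) by (simp add: insert_commute)
    hence "d = f {d, x, w}" using V1_vertex_with_two_edges[OF fin f d _ tri(6,2)] by blast
    moreover have "{d, x, w} = t" using t(1) by (simp add: insert_commute)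
    ultimately show False using t(2) tri(1) by simp
  qed
  show "w \<notin> {v \<in> V. degree E v = 1} \<union> f ` Tri2 E"
  proof
    assume w: "w \<in> {v \<in> V. degree E v = 1} \<union> f ` Tri2 E"
    have "{w, x} \<in> E" "{w, d} \<in> E" using tri(5,6) by (simp_all add: insert_commute)
    hence "w = f {w, x, d}" using V1_vertex_with_two_edges[OF fin f w _ _ tri(1)] by blast
    moreover have "{w, x, d} = t" using t(1) by (simp add: insert_commute)
    ultimately show False using t(2) tri(2) by simp
  qed
qed

section \<open>Graphs with L(G) = 2 l(G)\<close>

locale L_twice_l_graph =
  fixes V :: "'a set" and E :: "'a set set"
  assumes simple: "simple_graph V E" and L_twice_l: "L_num E = 2 * l_num E"
begin

definition optL :: "'a set set \<Rightarrow> bool" where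
  "optL F \<longleftrightarrow> max_matching E F \<and> nu (E - F) = L_num E"

definition optl :: "'a set set \<Rightarrow> bool" where
  "optl F \<longleftrightarrow> max_matching E F \<and> nu (E - F) = l_num E"

lemma fin: "finite E" using simple_graph_finite_edges[OF simple] .

lemma optL_max: "optL F \<Longrightarrow> max_matching E F"
  unfolding optL_def by simp

lemma optl_max: "optl F \<Longrightarrow> max_matching E F"
  unfolding optl_def by simp

lemma max_matching_facts:
  assumes "max_matching E F"
  shows "F \<subseteq> E" "matching F" "finite F" "card F = nu E"
  using assms fin finite_subset unfolding max_matching_def matching_in_def by auto

lemma optL_witness:
  "optL F \<Longrightarrow> \<exists>M. matching_in (E - F) M \<and> card M = L_num E"
  using nu_attained[of "E - F"] fin unfolding optL_def by auto

lemma optL_by_witness: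
  assumes "max_matching E F" "matching_in (E - F) M" "card M = L_num E"
  shows "optL F"
proof -
  have "card M \<le> nu (E - F)" using nu_upper fin assms(2) by blast
  thus ?thesis using L_num_upper[OF fin assms(1)] assms unfolding optL_def by simp
qed

text \<open>The counting argument: M - Fl and FL - Fl are matchings of G - Fl, so each has
  at most l edges, while |M| = 2l.  Everything is tight.\<close>
lemma gap_exchange:
  assumes L: "optL FL" and l: "optl Fl" and M: "matching_in (E - FL) M" "card M = L_num E"
  shows "Fl - FL \<subseteq> M" "card (M - Fl) = l_num E" "card (FL - Fl) = l_num E"
proof -
  note FL = max_matching_facts[OF optL_max[OF L]] and Fl = max_matching_facts[OF optl_max[OF l]]
  have nu_Fl: "nu (E - Fl) = l_num E" using l unfolding optl_def by simp
  have "finite M" using M(1) fin finite_subset unfolding matching_in_def by blast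
  have "matching_in (E - Fl) (M - Fl)" using M(1) matching_subset unfolding matching_in_def by blast
  hence M_Fl: "card (M - Fl) \<le> l_num E" using nu_upper[of "E - Fl"] fin nu_Fl by simp
  have "matching_in (E - Fl) (FL - Fl)" using FL(1,2) matching_subset unfolding matching_in_def by blast
  hence FL_Fl: "card (FL - Fl) \<le> l_num E" using nu_upper[of "E - Fl"] fin nu_Fl by simp
  have sym: "card (Fl - FL) = card (FL - Fl)"
    using FL(3,4) Fl(3,4) by (simp add: card_Diff_subset_Int Int_commute)
  have inter: "M \<inter> Fl \<subseteq> Fl - FL" using M(1) unfolding matching_in_def by blast
  hence le: "card (M \<inter> Fl) \<le> card (Fl - FL)" using Fl(3) by (simp add: card_mono)
  have split: "card M = card (M - Fl) + card (M \<inter> Fl)"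
    using \<open>finite M\<close> by (metis card_Int_Diff add.commute)
  have "card (M \<inter> Fl) = card (Fl - FL)"
    using M_Fl FL_Fl sym split le M(2) L_twice_l by linarith
  hence "M \<inter> Fl = Fl - FL" using inter Fl(3) by (simp add: card_subset_eq)
  thus "Fl - FL \<subseteq> M" by blast
  show "card (M - Fl) = l_num E" "card (FL - Fl) = l_num E"
    using M_Fl FL_Fl sym split le M(2) L_twice_l by linarith+
qed

text \<open>Part (1) in general form: if all edges at v meet a single edge of Fl and Fl
  misses v, then FL misses v too.  Otherwise the FL-edge at v would augment M - Fl.\<close>
lemma dominated_vertex_missed_by_FL:
  assumes L: "optL FL" and l: "optl Fl" and vl: "v \<notin> Vs Fl"
    and g: "g \<in> Fl" and dom: "\<forall>f\<in>E. v \<in> f \<longrightarrow> f \<inter> g \<noteq> {}"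
  shows "v \<notin> Vs FL"
proof
  assume "v \<in> Vs FL"
  then obtain e where e: "e \<in> FL" "v \<in> e" by (auto simp: Vs_iff)
  note FL = max_matching_facts[OF optL_max[OF L]] and Fl = max_matching_facts[OF optl_max[OF l]]
  have eE: "e \<in> E" using e FL(1) by blast
  obtain u where u: "e = {v, u}" using simple_graph_edge_other_end[OF simple eE e(2)] by blast
  have vg: "v \<notin> g" using vl g by (auto simp: Vs_iff)
  hence ug: "u \<in> g" using dom eE e(2) u by auto
  obtain M where M: "matching_in (E - FL) M" "card M = L_num E" using optL_witness[OF L] by blast
  have mM: "matching M" and ME: "M \<subseteq> E - FL" using M(1) unfolding matching_in_def by auto
  have "g \<noteq> e" using vg e(2) by blast
  hence "g \<notin> FL" using matchingD[OF FL(2) _ e(1) ug] u by blast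
  hence gM: "g \<in> M" using gap_exchange(1)[OF L l M] g by blast
  have disj: "\<forall>h\<in>M - Fl. h \<inter> e = {}"
  proof
    fix h assume h: "h \<in> M - Fl"
    have "h \<noteq> g" using h g by blast
    hence "h \<inter> g = {}" using mM h gM unfolding matching_def by blast
    moreover have "v \<notin> h \<or> h \<inter> g \<noteq> {}" using dom h ME by blast
    ultimately show "h \<inter> e = {}" using u ug by blast
  qed
  have "e \<notin> Fl" using vl e by (auto simp: Vs_iff)
  moreover have "matching_in (E - Fl) (M - Fl)" using M(1) matching_subset unfolding matching_in_def by blast
  ultimately have "card (M - Fl) < nu (E - Fl)"
    using matching_augment[OF _ _ _ _ disj] fin eE e(1) ME by blast
  thus False using gap_exchange(2)[OF L l M] l unfolding optl_def by simp
qed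

text \<open>A vertex missed by both FL and Fl has no neighbour covered by a common edge:
  otherwise the edge to that neighbour would augment FL - Fl inside G - Fl.\<close>
lemma missed_vertex_neighbour:
  assumes L: "optL FL" and l: "optl Fl" and vL: "v \<notin> Vs FL" and vl: "v \<notin> Vs Fl"
    and e: "{v, u} \<in> E"
  shows "u \<notin> Vs (FL \<inter> Fl)"
proof
  assume "u \<in> Vs (FL \<inter> Fl)"
  then obtain h where h: "h \<in> FL" "h \<in> Fl" "u \<in> h" by (auto simp: Vs_iff)
  note FL = max_matching_facts[OF optL_max[OF L]]
  have disj: "\<forall>k\<in>FL - Fl. k \<inter> {v, u} = {}"
  proof
    fix k assume k: "k \<in> FL - Fl"
    have "v \<notin> k" using k vL by (auto simp: Vs_iff)
    moreover have "u \<notin> k" using matchingD[OF FL(2), of k h u] L k h by auto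
    ultimately show "k \<inter> {v, u} = {}" by auto
  qed
  have "{v, u} \<notin> FL - Fl" using vL by (auto simp: Vs_iff)
  moreover have "{v, u} \<notin> Fl" using vl by (auto simp: Vs_iff)
  moreover have "matching_in (E - Fl) (FL - Fl)"
    using FL(1,2) matching_subset unfolding matching_in_def by blast
  ultimately have "card (FL - Fl) < nu (E - Fl)"
    using matching_augment[OF _ _ _ _ disj] fin e by blast
  moreover obtain M where "matching_in (E - FL) M" "card M = L_num E" using optL_witness[OF L] by blast
  ultimately show False using gap_exchange(3)[OF L l] l unfolding optl_def by simp
qed

text \<open>A vertex dominated by an Fl-edge g and an FL-edge h cannot be missed by both:
  if h is common, use missed_vertex_neighbour; otherwise exchanging h for the edge
  at v gives another L-optimal matching covering v, against
  dominated_vertex_missed_by_FL.\<close>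
lemma doubly_dominated_vertex:
  assumes L: "optL FL" and l: "optl Fl" and vL: "v \<notin> Vs FL" and vl: "v \<notin> Vs Fl"
    and g: "g \<in> Fl" "\<forall>f\<in>E. v \<in> f \<longrightarrow> f \<inter> g \<noteq> {}"
    and h: "h \<in> FL" "\<forall>f\<in>E. v \<in> f \<longrightarrow> f \<inter> h \<noteq> {}"
    and e: "e \<in> E" "v \<in> e"
  shows False
proof -
  note FL = max_matching_facts[OF optL_max[OF L]]
  obtain u where u: "e = {v, u}" using simple_graph_edge_other_end[OF simple e] by blast
  have vg: "v \<notin> g" and vh: "v \<notin> h" using vl vL g h by (auto simp: Vs_iff)
  have ug: "u \<in> g" and uh: "u \<in> h" using g(2) h(2) e vg vh u by auto
  show False
  proof (cases "h \<in> Fl")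
    case True
    hence "u \<in> Vs (FL \<inter> Fl)" using h(1) uh by (auto simp: Vs_iff)
    thus False using missed_vertex_neighbour[OF L l vL vl] e u by blast
  next
    case False
    obtain M where M: "matching_in (E - FL) M" "card M = L_num E" using optL_witness[OF L] by blast
    have mM: "matching M" and ME: "M \<subseteq> E - FL" using M(1) unfolding matching_in_def by auto
    have "g \<noteq> h" using False g(1) by blast
    hence "g \<notin> FL" using matchingD[OF FL(2) _ h(1) ug uh] by blast
    hence gM: "g \<in> M" using gap_exchange(1)[OF L l M] g(1) by blast
    define FL' where "FL' = insert e (FL - {h})"
    have mFL': "max_matching E FL'" unfolding FL'_def
    proof (rule max_matching_swap[OF fin optL_max[OF L] h(1) e(1)])
      show "e \<notin> FL" using vL e by (auto simp: Vs_iff)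
      show "\<forall>k\<in>FL - {h}. k \<inter> e = {}"
      proof
        fix k assume k: "k \<in> FL - {h}"
        have "v \<notin> k" using vL k by (auto simp: Vs_iff)
        moreover have "u \<notin> k" using matchingD[OF FL(2) _ h(1) _ uh] k by blast
        ultimately show "k \<inter> e = {}" using u by blast
      qed
    qed
    have "e \<noteq> g" using vg e(2) by blast
    hence "e \<notin> M" using matchingD[OF mM _ gM _ ug] u by blast
    hence "matching_in (E - FL') M" using ME mM unfolding FL'_def matching_in_def by blast
    hence "optL FL'" using optL_by_witness[OF mFL'] M(2) by blast
    moreover have "v \<in> Vs FL'" unfolding FL'_def using e by (auto simp: Vs_iff)
    ultimately show False using dominated_vertex_missed_by_FL[OF _ l vl g] by blast
  qed
qed

lemma candidate_FL_imp_Fl: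
  assumes L: "optL FL" and l: "optl Fl" and v: "V1_candidate E v" and vL: "v \<in> Vs FL"
  shows "v \<in> Vs Fl"
  using V1_candidate_dominated[OF simple v optl_max[OF l]] l
    dominated_vertex_missed_by_FL[OF L l] vL by blast

lemma candidate_covered_by_Fl:
  assumes l: "optl Fl" and v: "V1_candidate E v"
  shows "v \<in> Vs Fl"
proof (rule ccontr)
  assume vl: "v \<notin> Vs Fl"
  obtain FL where L: "optL FL" using L_num_attained[OF fin] unfolding optL_def by blast
  have vL: "v \<notin> Vs FL" using candidate_FL_imp_Fl[OF L l v] vl by blast
  obtain g where "g \<in> Fl" "\<forall>f\<in>E. v \<in> f \<longrightarrow> f \<inter> g \<noteq> {}"
    using V1_candidate_dominated[OF simple v optl_max[OF l] vl] l by blast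
  moreover obtain h where "h \<in> FL" "\<forall>f\<in>E. v \<in> f \<longrightarrow> f \<inter> h \<noteq> {}"
    using V1_candidate_dominated[OF simple v optL_max[OF L] vL] L by blast
  moreover obtain e where "e \<in> E" "v \<in> e" using V1_candidate_has_edge[OF v] by blast
  ultimately show False using doubly_dominated_vertex[OF L l vL vl] by blast
qed

text \<open>In a triangle xdw with deg x = deg d = 2, every l-optimal matching uses xd:
  it covers both x and d, and the alternative edges xw, dw clash at w.\<close>
lemma triangle_Fl_edge:
  assumes l: "optl Fl" and t: "t \<in> Tri2 E" "t = {x, d, w}" and dt: "deg2_triangle E x d w"
  shows "{x, d} \<in> Fl"
proof (rule ccontr)
  assume xd: "{x, d} \<notin> Fl"
  note Fl = max_matching_facts[OF optl_max[OF l]] and tri = deg2_triangleD[OF dt]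
  have "V1_candidate E x" "V1_candidate E d"
    using t deg2_triangle_degrees[OF dt] unfolding V1_candidate_def by auto
  then obtain gx gd where gx: "gx \<in> Fl" "x \<in> gx" and gd: "gd \<in> Fl" "d \<in> gd"
    using candidate_covered_by_Fl[OF l] by (meson Vs_iff)
  have "gx = {x, w}" using tri(7)[of gx] gx Fl(1) xd by blast
  moreover have "gd = {d, w}" using tri(8)[of gd] gd Fl(1) xd by blast
  ultimately have "gx = gd" using matchingD[OF Fl(2) gx(1) gd(1)] by blast
  thus False using tri(1-3) \<open>gx = {x, w}\<close> \<open>gd = {d, w}\<close> by (auto simp: doubleton_eq_iff)
qed

text \<open>Rotating the FL-edge xw of such a triangle to dw keeps FL L-optimal; a matching
  of G - FL of size L that uses dw is repaired by replacing dw with xw.\<close>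
lemma triangle_swap_optL:
  assumes L: "optL FL" and dt: "deg2_triangle E x d w" and xw: "{x, w} \<in> FL"
  shows "optL (insert {d, w} (FL - {{x, w}}))"
proof -
  note FL = max_matching_facts[OF optL_max[OF L]] and tri = deg2_triangleD[OF dt]
  have dL: "d \<notin> Vs FL" using deg2_triangle_partner_missed[OF dt FL(2,1) xw] .
  define FL' where "FL' = insert {d, w} (FL - {{x, w}})"
  have mFL': "max_matching E FL'" unfolding FL'_def
  proof (rule max_matching_swap[OF fin optL_max[OF L] xw tri(6)])
    show "{d, w} \<notin> FL" using dL by (auto simp: Vs_iff)
    show "\<forall>k\<in>FL - {{x, w}}. k \<inter> {d, w} = {}"
    proof
      fix k assume k: "k \<in> FL - {{x, w}}"
      have "d \<notin> k" using dL k by (auto simp: Vs_iff)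
      moreover have "w \<notin> k" using matchingD[OF FL(2) _ xw, of k w] k by blast
      ultimately show "k \<inter> {d, w} = {}" by blast
    qed
  qed
  obtain M where M: "matching_in (E - FL) M" "card M = L_num E" using optL_witness[OF L] by blast
  have mM: "matching M" and ME: "M \<subseteq> E - FL" and fM: "finite M"
    using M(1) fin finite_subset unfolding matching_in_def by auto
  have "\<exists>M'. matching_in (E - FL') M' \<and> card M' = card M"
  proof (cases "{d, w} \<in> M")
    case False
    thus ?thesis using M(1) unfolding FL'_def matching_in_def by blast
  next
    case True
    note rot = deg2_triangle_rotate[OF dt mM _ fM True]
    have "{x, w} \<notin> FL'" using tri(1-3) unfolding FL'_def by (auto simp: doubleton_eq_iff)
    hence "matching_in (E - FL') (insert {x, w} (M - {{d, w}}))"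
      using rot(1) ME tri(5) unfolding FL'_def matching_in_def by blast
    thus ?thesis using rot(2) ME by blast
  qed
  thus ?thesis unfolding FL'_def[symmetric] using optL_by_witness[OF mFL'] M(2) by metis
qed

text \<open>If FL uses the edge xw of a triangle whose representative is x, rotating it to dw
  gives an L-optimal matching covering fewer vertices of V_1: x is freed and the
  newly covered d, w are not in V_1.\<close>
lemma triangle_swap_fewer_V1:
  assumes L: "optL FL" and f: "\<forall>t\<in>Tri2 E. f t \<in> t \<and> degree E (f t) = 2"
    and V1_eq: "V1 = {v \<in> V. degree E v = 1} \<union> f ` Tri2 E"
    and t: "t \<in> Tri2 E" "t = {x, d, w}" "x = f t" and dt: "deg2_triangle E x d w"
    and xw: "{x, w} \<in> FL"
  shows "\<exists>FL'. optL FL' \<and> card (Vs FL' \<inter> V1) < card (Vs FL \<inter> V1)"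
proof -
  note FL = max_matching_facts[OF optL_max[OF L]] and tri = deg2_triangleD[OF dt]
  define FL' where "FL' = insert {d, w} (FL - {{x, w}})"
  have L': "optL FL'" unfolding FL'_def using triangle_swap_optL[OF L dt xw] .
  have "{x, d} \<notin> FL" using deg2_triangle_partner_missed[OF dt FL(2,1) xw] by (auto simp: Vs_iff)
  hence "x \<notin> Vs FL'"
    using tri(1,2,7) FL(1) unfolding FL'_def by (auto simp: Vs_iff doubleton_eq_iff)
  moreover have "Vs FL' \<subseteq> Vs FL \<union> {d, w}" unfolding FL'_def by (auto simp: Vs_iff)
  moreover have "d \<notin> V1" "w \<notin> V1"
    using deg2_triangle_partners_not_V1[OF fin f t(2,3) dt] V1_eq by auto
  moreover have "x \<in> V1" using V1_eq t by blast
  moreover have "x \<in> Vs FL" using xw by (auto simp: Vs_iff)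
  ultimately have "Vs FL' \<inter> V1 \<subset> Vs FL \<inter> V1" by blast
  moreover have "finite (Vs FL \<inter> V1)"
    using simple_graph_Vs_subset[OF simple FL(1)] simple finite_subset
    unfolding simple_graph_def by blast
  ultimately show ?thesis using L' psubset_card_mono by blast
qed

lemma least_FL_shares_V1_edges:
  assumes V1: "is_V1 V E V1" and l: "optl Fl" and L: "optL FL"
    and least: "\<And>F. optL F \<Longrightarrow> card (Vs FL \<inter> V1) \<le> card (Vs F \<inter> V1)"
    and xV1: "x \<in> V1" and xL: "x \<in> Vs FL"
  shows "x \<in> Vs (FL \<inter> Fl)"
proof -
  obtain f where f: "\<forall>t\<in>Tri2 E. f t \<in> t \<and> degree E (f t) = 2"
    and V1_eq: "V1 = {v \<in> V. degree E v = 1} \<union> f ` Tri2 E"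
    using V1 unfolding is_V1_def by blast
  note FL = max_matching_facts[OF optL_max[OF L]] and Fl = max_matching_facts[OF optl_max[OF l]]
  obtain e where e: "e \<in> FL" "x \<in> e" using xL by (auto simp: Vs_iff)
  obtain g where g: "g \<in> Fl" "x \<in> g"
    using candidate_covered_by_Fl[OF l is_V1_candidates[OF V1 xV1]] by (auto simp: Vs_iff)
  from xV1 consider (pendant) "degree E x = 1" | (tri) t where "t \<in> Tri2 E" "x = f t"
    unfolding V1_eq by blast
  then show ?thesis
  proof cases
    case pendant
    have "e \<in> E" "g \<in> E" using e(1) g(1) FL(1) Fl(1) by blast+
    hence "e = g" using degree_one_unique_edge[OF pendant _ _ e(2) g(2)] by blast
    thus ?thesis using e g by (auto simp: Vs_iff)
  next
    case tri
    have "x \<in> t" "degree E x = 2" using f tri by auto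
    then obtain d w where t: "t = {x, d, w}" and dt: "deg2_triangle E x d w"
      using Tri2_structure[OF fin tri(1)] by blast
    have "e = {x, d} \<or> e = {x, w}" using deg2_triangleD(7)[OF dt] e FL(1) by blast
    moreover have "e \<noteq> {x, w}"
    proof
      assume "e = {x, w}"
      then obtain FL' where "optL FL'" "card (Vs FL' \<inter> V1) < card (Vs FL \<inter> V1)"
        using triangle_swap_fewer_V1[OF L f V1_eq tri(1) t tri(2) dt] e(1) by blast
      thus False using least by (simp add: not_less[symmetric])
    qed
    moreover have "{x, d} \<in> Fl" using triangle_Fl_edge[OF l tri(1) t dt] .
    ultimately have "e \<in> FL \<inter> Fl" using e(1) by blast
    thus ?thesis using e(2) by (auto simp: Vs_iff)
  qed
qed

lemma V1_cover_common:
  assumes V1: "is_V1 V E V1"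
  shows "\<exists>Fl FL. optl Fl \<and> optL FL \<and> V1 \<subseteq> Vs (FL \<inter> Fl) \<union> (Vs Fl - Vs FL)"
proof -
  obtain Fl where l: "optl Fl" using l_num_attained[OF fin] unfolding optl_def by blast
  obtain FL0 where "optL FL0" using L_num_attained[OF fin] unfolding optL_def by blast
  then obtain FL where L: "optL FL"
    and least: "\<And>F. optL F \<Longrightarrow> card (Vs FL \<inter> V1) \<le> card (Vs F \<inter> V1)"
    using ex_has_least_nat[of optL FL0 "\<lambda>F. card (Vs F \<inter> V1)"] by blast
  have "V1 \<subseteq> Vs (FL \<inter> Fl) \<union> (Vs Fl - Vs FL)"
    using least_FL_shares_V1_edges[OF V1 l L least] candidate_covered_by_Fl[OF l]
      is_V1_candidates[OF V1] by blast
  thus ?thesis using l L by blast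
qed

end

theorem claim5:
  fixes V :: "'a set" and E :: "'a set set" and V1 :: "'a set"
  assumes "simple_graph V E"
    and "graph_connected V E"
    and "card V \<ge> 3"
    and "L_num E = 2 * l_num E"
    and "is_V1 V E V1"
  shows "(\<forall>FL Fl. max_matching E FL \<and> nu (E - FL) = L_num E \<and>
                 max_matching E Fl \<and> nu (E - Fl) = l_num E \<longrightarrow>
                 (Vs FL - Vs Fl) \<inter> V1 = {})
       \<and> (\<exists>Fl FL. max_matching E Fl \<and> nu (E - Fl) = l_num E \<and>
                 max_matching E FL \<and> nu (E - FL) = L_num E \<and>
                 V1 \<subseteq> Vs (FL \<inter> Fl) \<union> (Vs Fl - Vs FL))"
proof -
  interpret L_twice_l_graph V E using assms(1,4) by unfold_locales
  have part1: "(Vs FL - Vs Fl) \<inter> V1 = {}" if "optL FL" "optl Fl" for FL Fl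
    using candidate_FL_imp_Fl[OF that] is_V1_candidates[OF assms(5)] by blast
  show ?thesis
    using part1 V1_cover_common[OF assms(5)] unfolding optL_def optl_def by blast
qed

end
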